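(* The automorphic growth of the Heisenberg group $H(\mathbb{Z})=\langle a,b,c\mid c=[a,b],\ c\text{ is central}\rangle$ is quadratic, i.e. $\alpha_{H(\mathbb{Z})}\sim(n\mapsto n^2)$.
   Context: For a finitely generated group $G$ with finite generating set $\Sigma$, the automorphic growth function sends $n$ to the number of $\operatorname{Aut}(G)$-orbits of $G$ containing an element of word length at most $n$ with respect to $\Sigma$. For non-decreasing non-zero $f,g\colon\mathbb{N}\to\mathbb{N}$ write $f\preccurlyeq g$ if there is $\lambda\in\mathbb{N}\setminus\{0\}$ with $f(n)\le\lambda g(\lambda n+\lambda)+\lambda$ for all $n$, and $f\sim g$ if both hold in each direction; $\alpha_G$ is the $\sim$-class of the automorphic growth function, which is independent of $\Sigma$. *)

theory Defs
  imports "HOL-Algebra.Group"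
begin

text \<open>The integer Heisenberg group H(Z), realised as upper unitriangular
  integer 3x3 matrices [[1,x,z],[0,1,y],[0,0,1]] encoded as triples (x,y,z).\<close>

definition heis :: "(int \<times> int \<times> int) monoid" where
  "heis = \<lparr> carrier = UNIV,
            mult = (\<lambda>(x, y, z) (x', y', z'). (x + x', y + y', z + z' + x * y')),
            one = (0, 0, 0) \<rparr>"

definition heis_a :: "int \<times> int \<times> int" where "heis_a = (1, 0, 0)"
definition heis_b :: "int \<times> int \<times> int" where "heis_b = (0, 1, 0)"

definition heis_c :: "int \<times> int \<times> int" where
  "heis_c = inv\<^bsub>heis\<^esub> heis_a \<otimes>\<^bsub>heis\<^esub> inv\<^bsub>heis\<^esub> heis_b
            \<otimes>\<^bsub>heis\<^esub> heis_a \<otimes>\<^bsub>heis\<^esub> heis_b"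

primrec word_ball :: "('a, 'b) monoid_scheme \<Rightarrow> 'a set \<Rightarrow> nat \<Rightarrow> 'a set" where
  "word_ball G S 0 = {\<one>\<^bsub>G\<^esub>}"
| "word_ball G S (Suc n) = word_ball G S n \<union>
     {g \<otimes>\<^bsub>G\<^esub> s | g s. g \<in> word_ball G S n \<and> (s \<in> S \<or> s \<in> m_inv G ` S)}"

definition aut_orbit :: "('a, 'b) monoid_scheme \<Rightarrow> 'a \<Rightarrow> 'a set" where
  "aut_orbit G g = {\<phi> g | \<phi>. \<phi> \<in> iso G G}"

definition aut_growth :: "('a, 'b) monoid_scheme \<Rightarrow> 'a set \<Rightarrow> nat \<Rightarrow> nat" where
  "aut_growth G S n = card (aut_orbit G ` word_ball G S n)"

definition growth_le :: "(nat \<Rightarrow> nat) \<Rightarrow> (nat \<Rightarrow> nat) \<Rightarrow> bool" where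
  "growth_le f g \<longleftrightarrow> (\<exists>L::nat. L \<noteq> 0 \<and> (\<forall>n. f n \<le> L * g (L * n + L) + L))"

definition growth_equiv :: "(nat \<Rightarrow> nat) \<Rightarrow> (nat \<Rightarrow> nat) \<Rightarrow> bool" where
  "growth_equiv f g \<longleftrightarrow> growth_le f g \<and> growth_le g f"

end

theory Submission
  imports Defs
begin

(* Upper bound: automorphisms realise the Euclidean algorithm on the abelianisation (x, y), so
   every non-central element of the ball of radius n is in the orbit of some (e, 0, r) with
   0 < |e| <= n and |r| < |e|, while central elements of the ball are (0, 0, z) with |z| <= n^2;
   this gives O(n^2) orbits. Lower bound: every automorphism acts on the centre Z as +1 or -1,
   and each (0, 0, k) with k <= n^2 is the product of a commutator [a^i, b^j] and c^r of length O(n),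
   so these n^2 + 1 central elements lie in distinct orbits. *)

section \<open>Word balls and automorphism orbits in an arbitrary group\<close>

lemma finite_word_ball:
  assumes "finite S"
  shows "finite (word_ball G S n)"
proof (induction n)
  case (Suc n)
  have "word_ball G S (Suc n) \<subseteq>
      word_ball G S n \<union> (\<lambda>(g, s). g \<otimes>\<^bsub>G\<^esub> s) ` (word_ball G S n \<times> (S \<union> m_inv G ` S))"
    by auto
  then show ?case
    using Suc assms by (meson finite_SigmaI finite_Un finite_imageI rev_finite_subset)
qed simp

lemma word_ball_mono: "m \<le> n \<Longrightarrow> word_ball G S m \<subseteq> word_ball G S n"
  by (induction n rule: dec_induct) auto

lemma (in group) word_ball_subset_carrier:
  "S \<subseteq> carrier G \<Longrightarrow> word_ball G S n \<subseteq> carrier G"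
  by (induction n) auto

lemma (in group) word_ball_mult_pow:
  assumes S: "S \<subseteq> carrier G" and g: "g \<in> word_ball G S m" and s: "s \<in> S \<union> m_inv G ` S"
  shows "g \<otimes> s [^] j \<in> word_ball G S (m + j)"
proof (induction j)
  have "g \<in> carrier G" using g word_ball_subset_carrier[OF S] by auto
  case 0
  then show ?case using g \<open>g \<in> carrier G\<close> by simp
next
  case (Suc j)
  have "s \<in> carrier G" using s S by auto
  moreover have "g \<in> carrier G" using g word_ball_subset_carrier[OF S] by auto
  ultimately have "g \<otimes> s [^] Suc j = (g \<otimes> s [^] j) \<otimes> s"
    by (simp add: m_assoc)
  then show ?case using Suc s by auto
qed

lemma self_in_aut_orbit: "g \<in> aut_orbit G g"
  using iso_set_refl unfolding aut_orbit_def by force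

lemma aut_orbit_iso_subset:
  assumes "\<phi> \<in> iso G G"
  shows "aut_orbit G (\<phi> g) \<subseteq> aut_orbit G g"
proof
  fix h assume "h \<in> aut_orbit G (\<phi> g)"
  then obtain \<psi> where "\<psi> \<in> iso G G" "h = (\<psi> \<circ> \<phi>) g"
    unfolding aut_orbit_def by auto
  then show "h \<in> aut_orbit G g"
    using iso_set_trans[OF assms] unfolding aut_orbit_def by blast
qed

lemma (in group) aut_orbit_iso_eq:
  assumes \<phi>: "\<phi> \<in> iso G G" and g: "g \<in> carrier G"
  shows "aut_orbit G (\<phi> g) = aut_orbit G g"
proof
  show "aut_orbit G (\<phi> g) \<subseteq> aut_orbit G g"
    using aut_orbit_iso_subset[OF \<phi>] .
  have "inj_on \<phi> (carrier G)" using \<phi> by (simp add: iso_iff)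
  then have "aut_orbit G g = aut_orbit G (inv_into (carrier G) \<phi> (\<phi> g))"
    using g by simp
  also have "\<dots> \<subseteq> aut_orbit G (\<phi> g)"
    by (rule aut_orbit_iso_subset[OF iso_set_sym[OF \<phi>]])
  finally show "aut_orbit G g \<subseteq> aut_orbit G (\<phi> g)" .
qed

lemma aut_growth_le_card_representatives:
  assumes "finite R" and "\<And>g. g \<in> word_ball G S n \<Longrightarrow> \<exists>r\<in>R. aut_orbit G g = aut_orbit G r"
  shows "aut_growth G S n \<le> card R"
proof -
  have "aut_orbit G ` word_ball G S n \<subseteq> aut_orbit G ` R"
    using assms(2) by fastforce
  then have "aut_growth G S n \<le> card (aut_orbit G ` R)"
    unfolding aut_growth_def using assms(1) by (intro card_mono) auto
  also have "\<dots> \<le> card R" by (rule card_image_le[OF assms(1)])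
  finally show ?thesis .
qed

lemma card_le_aut_growth:
  assumes "finite S" and "A \<subseteq> word_ball G S n" and "inj_on (aut_orbit G) A"
  shows "card A \<le> aut_growth G S n"
proof -
  have "card A = card (aut_orbit G ` A)" using assms(3) by (simp add: card_image)
  also have "\<dots> \<le> aut_growth G S n"
    unfolding aut_growth_def using assms finite_word_ball by (intro card_mono finite_imageI) auto
  finally show ?thesis .
qed

section \<open>The Heisenberg group\<close>

lemma heis_mult [simp]:
  "(x, y, z) \<otimes>\<^bsub>heis\<^esub> (x', y', z') = (x + x', y + y', z + z' + x * y')"
  by (simp add: heis_def)

lemma heis_one [simp]: "\<one>\<^bsub>heis\<^esub> = (0, 0, 0)"
  by (simp add: heis_def)

lemma heis_carrier [simp]: "carrier heis = UNIV"
  by (simp add: heis_def)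

lemma group_heis: "group heis"
proof (rule groupI)
  fix g h k :: "int \<times> int \<times> int"
  show "g \<otimes>\<^bsub>heis\<^esub> h \<otimes>\<^bsub>heis\<^esub> k = g \<otimes>\<^bsub>heis\<^esub> (h \<otimes>\<^bsub>heis\<^esub> k)"
    by (cases g; cases h; cases k) (simp add: algebra_simps)
  show "\<one>\<^bsub>heis\<^esub> \<otimes>\<^bsub>heis\<^esub> g = g" by (cases g) simp
  obtain x y z where "g = (x, y, z)" by (cases g)
  then show "\<exists>h\<in>carrier heis. h \<otimes>\<^bsub>heis\<^esub> g = \<one>\<^bsub>heis\<^esub>"
    by (intro bexI[of _ "(-x, -y, x * y - z)"]) simp_all
qed auto

interpretation heis: group heis
  by (rule group_heis)

lemma heis_inv [simp]: "inv\<^bsub>heis\<^esub> (x, y, z) = (-x, -y, x * y - z)"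
  by (rule heis.inv_equality) auto

lemma heis_c_eq: "heis_c = (0, 0, 1)"
  by (simp add: heis_c_def heis_a_def heis_b_def)

definition tri :: "int \<Rightarrow> int" where
  "tri y = y * (y - 1) div 2"

lemma tri_add: "tri (a + b) = tri a + tri b + a * b"
proof -
  have double_tri: "2 * tri y = y * (y - 1)" for y
    unfolding tri_def by simp
  have "2 * tri (a + b) = 2 * (tri a + tri b + a * b)"
    unfolding distrib_left double_tri by (simp add: algebra_simps)
  then show ?thesis by simp
qed

lemma heis_pow:
  "(x, y, z) [^]\<^bsub>heis\<^esub> (k :: nat) = (int k * x, int k * y, int k * z + tri (int k) * x * y)"
proof (induction k)
  case (Suc k)
  have "tri (int k + 1) = tri (int k) + int k"
    using tri_add[of "int k" 1] by (simp add: tri_def[of 1])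
  then show ?case using Suc by (simp add: algebra_simps)
qed (simp add: tri_def)

lemma heis_central_int_pow: "(0, 0, z) [^]\<^bsub>heis\<^esub> (k :: int) = (0, 0, k * z)"
  by (simp add: int_pow_def2 heis_pow)

abbreviation heis_ball :: "nat \<Rightarrow> (int \<times> int \<times> int) set" where
  "heis_ball \<equiv> word_ball heis {heis_a, heis_b, heis_c}"

lemma heis_symmetric_generators:
  "{heis_a, heis_b, heis_c} \<union> m_inv heis ` {heis_a, heis_b, heis_c} =
    {(1, 0, 0), (0, 1, 0), (0, 0, 1), (-1, 0, 0), (0, -1, 0), (0, 0, -1)}"
  by (auto simp: heis_a_def heis_b_def heis_c_eq)

lemma heis_ball_bound:
  "(x, y, z) \<in> heis_ball n \<Longrightarrow> \<bar>x\<bar> + \<bar>y\<bar> \<le> int n \<and> \<bar>z\<bar> \<le> int n ^ 2"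
proof (induction n arbitrary: x y z)
  case (Suc n)
  show ?case
  proof (cases "(x, y, z) \<in> heis_ball n")
    case True
    then have "\<bar>x\<bar> + \<bar>y\<bar> \<le> int n" "\<bar>z\<bar> \<le> int n ^ 2" using Suc.IH by auto
    moreover have "int n ^ 2 \<le> int (Suc n) ^ 2" by (simp add: power_mono)
    ultimately show ?thesis by linarith
  next
    case False
    with Suc.prems obtain g s where
      prod: "(x, y, z) = g \<otimes>\<^bsub>heis\<^esub> s" and ball: "g \<in> heis_ball n" and
      s: "s \<in> {(1, 0, 0), (0, 1, 0), (0, 0, 1), (-1, 0, 0), (0, -1, 0), (0, 0, -1)}"
      unfolding heis_symmetric_generators[symmetric] by auto
    obtain x0 y0 z0 where g: "g = (x0, y0, z0)" by (cases g)
    from Suc.IH[OF ball[unfolded g]] have "\<bar>x0\<bar> + \<bar>y0\<bar> \<le> int n" "\<bar>z0\<bar> \<le> int n ^ 2" by auto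
    moreover have "int n ^ 2 + int n + 1 \<le> int (Suc n) ^ 2"
      by (simp add: power2_eq_square algebra_simps)
    ultimately show ?thesis using prod s unfolding g by auto
  qed
qed simp

section \<open>Automorphisms of the Heisenberg group\<close>

lemma heis_isoI:
  assumes "\<And>g h. f (g \<otimes>\<^bsub>heis\<^esub> h) = f g \<otimes>\<^bsub>heis\<^esub> f h"
    and "\<And>g. f' (f g) = g" and "\<And>g. f (f' g) = g"
  shows "f \<in> iso heis heis"
  unfolding iso_def hom_def using assms by (auto intro!: bij_betwI[of f _ _ f'])

definition heis_swap :: "int \<times> int \<times> int \<Rightarrow> int \<times> int \<times> int" where
  "heis_swap = (\<lambda>(x, y, z). (y, x, x * y - z))"

text \<open>The automorphism fixing a and sending b to b a^k.\<close>

definition heis_shear :: "int \<Rightarrow> int \<times> int \<times> int \<Rightarrow> int \<times> int \<times> int" where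
  "heis_shear k = (\<lambda>(x, y, z). (x + k * y, y, z + k * tri y))"

text \<open>Conjugation by b^-v.\<close>

definition heis_conj :: "int \<Rightarrow> int \<times> int \<times> int \<Rightarrow> int \<times> int \<times> int" where
  "heis_conj v = (\<lambda>(x, y, z). (x, y, z + x * v))"

lemma heis_swap_iso: "heis_swap \<in> iso heis heis"
proof (rule heis_isoI[where f' = heis_swap])
  fix g h :: "int \<times> int \<times> int"
  show "heis_swap (g \<otimes>\<^bsub>heis\<^esub> h) = heis_swap g \<otimes>\<^bsub>heis\<^esub> heis_swap h"
    by (cases g; cases h) (simp add: heis_swap_def algebra_simps)
  show "heis_swap (heis_swap g) = g" by (cases g) (simp add: heis_swap_def)
  then show "heis_swap (heis_swap g) = g" .
qed

lemma heis_shear_iso: "heis_shear k \<in> iso heis heis"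
proof (rule heis_isoI[where f' = "heis_shear (-k)"])
  fix g h :: "int \<times> int \<times> int"
  show "heis_shear k (g \<otimes>\<^bsub>heis\<^esub> h) = heis_shear k g \<otimes>\<^bsub>heis\<^esub> heis_shear k h"
    by (cases g; cases h) (simp add: heis_shear_def tri_add algebra_simps)
  show "heis_shear (-k) (heis_shear k g) = g" by (cases g) (simp add: heis_shear_def)
  show "heis_shear k (heis_shear (-k) g) = g" by (cases g) (simp add: heis_shear_def)
qed

lemma heis_conj_iso: "heis_conj v \<in> iso heis heis"
proof (rule heis_isoI[where f' = "heis_conj (-v)"])
  fix g h :: "int \<times> int \<times> int"
  show "heis_conj v (g \<otimes>\<^bsub>heis\<^esub> h) = heis_conj v g \<otimes>\<^bsub>heis\<^esub> heis_conj v h"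
    by (cases g; cases h) (simp add: heis_conj_def algebra_simps)
  show "heis_conj (-v) (heis_conj v g) = g" by (cases g) (simp add: heis_conj_def)
  show "heis_conj v (heis_conj (-v) g) = g" by (cases g) (simp add: heis_conj_def)
qed

lemma heis_orbit_reduce_to_x_axis:
  assumes "(x, y) \<noteq> (0, 0)"
  shows "\<exists>e z'. e \<noteq> 0 \<and> \<bar>e\<bar> \<le> max \<bar>x\<bar> \<bar>y\<bar> \<and> aut_orbit heis (x, y, z) = aut_orbit heis (e, 0, z')"
  using assms
proof (induction "nat \<bar>y\<bar>" arbitrary: x y z rule: less_induct)
  case less
  show ?case
  proof (cases "y = 0")
    case True
    then show ?thesis using less.prems by auto
  next
    case False
    define z1 where "z1 = z - x div y * tri y"
    have "x + - (x div y) * y = x mod y"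
      using minus_div_mult_eq_mod[of x y] by simp
    then have "heis_shear (- (x div y)) (x, y, z) = (x mod y, y, z1)"
      by (simp add: heis_shear_def z1_def)
    then have "heis_swap (heis_shear (- (x div y)) (x, y, z)) = (y, x mod y, x mod y * y - z1)"
      by (simp add: heis_swap_def)
    then have orbit: "aut_orbit heis (x, y, z) = aut_orbit heis (y, x mod y, x mod y * y - z1)"
      using heis.aut_orbit_iso_eq[OF heis_swap_iso] heis.aut_orbit_iso_eq[OF heis_shear_iso]
      by (metis UNIV_I heis_carrier)
    have smaller: "\<bar>x mod y\<bar> < \<bar>y\<bar>" using abs_mod_less False by blast
    then obtain e z' where "e \<noteq> 0" "\<bar>e\<bar> \<le> max \<bar>y\<bar> \<bar>x mod y\<bar>"
        "aut_orbit heis (y, x mod y, x mod y * y - z1) = aut_orbit heis (e, 0, z')"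
      using less.hyps[of "x mod y" y "x mod y * y - z1"] False by auto
    then show ?thesis using orbit smaller by auto
  qed
qed

lemma heis_orbit_normal_form:
  assumes "(x, y) \<noteq> (0, 0)"
  obtains e r where "e \<noteq> 0" "\<bar>e\<bar> \<le> max \<bar>x\<bar> \<bar>y\<bar>" "\<bar>r\<bar> < \<bar>e\<bar>"
    "aut_orbit heis (x, y, z) = aut_orbit heis (e, 0, r)"
proof -
  obtain e z' where e: "e \<noteq> 0" "\<bar>e\<bar> \<le> max \<bar>x\<bar> \<bar>y\<bar>"
      and orbit: "aut_orbit heis (x, y, z) = aut_orbit heis (e, 0, z')"
    using heis_orbit_reduce_to_x_axis[OF assms] by blast
  have "heis_conj (- (z' div e)) (e, 0, z') = (e, 0, z' mod e)"
    using minus_div_mult_eq_mod[of z' e] by (simp add: heis_conj_def algebra_simps)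
  then have "aut_orbit heis (e, 0, z') = aut_orbit heis (e, 0, z' mod e)"
    using heis.aut_orbit_iso_eq[OF heis_conj_iso] by (metis UNIV_I heis_carrier)
  then show ?thesis
    using e orbit abs_mod_less[OF e(1)] by (intro that) auto
qed

lemma heis_endo_centre:
  assumes \<phi>: "\<phi> \<in> hom heis heis"
  obtains D where "\<And>k. \<phi> (0, 0, k) = (0, 0, k * D)"
proof -
  obtain p r t where a: "\<phi> (1, 0, 0) = (p, r, t)" by (cases "\<phi> (1, 0, 0)")
  obtain q s u where b: "\<phi> (0, 1, 0) = (q, s, u)" by (cases "\<phi> (0, 1, 0)")
  obtain w1 w2 w3 where c: "\<phi> (0, 0, 1) = (w1, w2, w3)" by (cases "\<phi> (0, 0, 1)")
  have mult: "\<phi> (g \<otimes>\<^bsub>heis\<^esub> h) = \<phi> g \<otimes>\<^bsub>heis\<^esub> \<phi> h" for g h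
    using \<phi> by (simp add: hom_mult)
  have "\<phi> ((1, 0, 0) \<otimes>\<^bsub>heis\<^esub> (0, 1, 0)) = \<phi> ((0, 1, 0) \<otimes>\<^bsub>heis\<^esub> (1, 0, 0) \<otimes>\<^bsub>heis\<^esub> (0, 0, 1))"
    by simp
  then have c': "\<phi> (0, 0, 1) = (0, 0, p * s - q * r)"
    unfolding mult a b c by (simp add: algebra_simps)
  have "\<phi> (0, 0, k) = (0, 0, k * (p * s - q * r))" for k
  proof -
    have "\<phi> (0, 0, k) = \<phi> ((0, 0, 1) [^]\<^bsub>heis\<^esub> k)" by (simp add: heis_central_int_pow)
    also have "\<dots> = \<phi> (0, 0, 1) [^]\<^bsub>heis\<^esub> k" by (simp add: hom_int_pow[OF \<phi>] group_heis)
    finally show ?thesis unfolding c' heis_central_int_pow .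
  qed
  then show ?thesis by (rule that)
qed

lemma heis_aut_centre:
  assumes \<phi>: "\<phi> \<in> iso heis heis"
  obtains D where "D = 1 \<or> D = -1" and "\<And>k. \<phi> (0, 0, k) = (0, 0, k * D)"
proof -
  define \<psi> where "\<psi> = inv_into (carrier heis) \<phi>"
  have "\<psi> \<in> iso heis heis" unfolding \<psi>_def by (rule heis.iso_set_sym[OF \<phi>])
  obtain D where D: "\<And>k. \<phi> (0, 0, k) = (0, 0, k * D)"
    using heis_endo_centre iso_imp_homomorphism[OF \<phi>] by blast
  obtain D' where D': "\<And>k. \<psi> (0, 0, k) = (0, 0, k * D')"
    using heis_endo_centre iso_imp_homomorphism[OF \<open>\<psi> \<in> iso heis heis\<close>] by blast
  have "inj_on \<phi> (carrier heis)" using \<phi> by (simp add: iso_iff)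
  then have "(0, 0, 1) = \<psi> (\<phi> (0, 0, 1))" unfolding \<psi>_def by simp
  then have "D * D' = 1" by (simp add: D D')
  then show ?thesis using that D zmult_eq_1_iff by blast
qed

lemma inj_on_aut_orbit_heis_centre: "inj_on (aut_orbit heis) ({0} \<times> {0} \<times> {0..})"
proof (rule inj_onI)
  fix g h assume g: "g \<in> {0} \<times> {0} \<times> {0..}" and h: "h \<in> {0} \<times> {0} \<times> {0..}"
    and orbit: "aut_orbit heis g = aut_orbit heis h"
  obtain k where k: "g = (0, 0, k)" "k \<ge> 0" using g by auto
  obtain k' where k': "h = (0, 0, k')" "k' \<ge> 0" using h by auto
  obtain \<phi> where "\<phi> \<in> iso heis heis" "h = \<phi> g"
    using self_in_aut_orbit[of h heis] orbit unfolding aut_orbit_def by auto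
  moreover obtain D where "D = 1 \<or> D = -1" "\<phi> (0, 0, k) = (0, 0, k * D)"
    using heis_aut_centre[OF \<open>\<phi> \<in> iso heis heis\<close>] by metis
  ultimately show "g = h" using k k' by auto
qed

section \<open>Counting orbits in word balls\<close>

definition heis_orbit_representatives :: "nat \<Rightarrow> (int \<times> int \<times> int) set" where
  "heis_orbit_representatives n =
     {-int n..int n} \<times> {0} \<times> {-int n..int n} \<union> {0} \<times> {0} \<times> {-(int n ^ 2)..int n ^ 2}"

lemma heis_ball_orbit_representatives:
  assumes "g \<in> heis_ball n"
  shows "\<exists>r\<in>heis_orbit_representatives n. aut_orbit heis g = aut_orbit heis r"
proof -
  obtain x y z where g: "g = (x, y, z)" by (cases g)
  have bound: "\<bar>x\<bar> + \<bar>y\<bar> \<le> int n" "\<bar>z\<bar> \<le> int n ^ 2"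
    using heis_ball_bound assms unfolding g by auto
  show ?thesis
  proof (cases "(x, y) = (0, 0)")
    case True
    then have "g \<in> heis_orbit_representatives n"
      using bound unfolding g heis_orbit_representatives_def by (auto simp: abs_le_iff)
    then show ?thesis by blast
  next
    case False
    then obtain e r where e: "\<bar>e\<bar> \<le> max \<bar>x\<bar> \<bar>y\<bar>" "\<bar>r\<bar> < \<bar>e\<bar>"
        and orbit: "aut_orbit heis g = aut_orbit heis (e, 0, r)"
      using heis_orbit_normal_form unfolding g by metis
    have "max \<bar>x\<bar> \<bar>y\<bar> \<le> int n" using bound(1) by (auto simp: max_def)
    then have "\<bar>e\<bar> \<le> int n" "\<bar>r\<bar> \<le> int n" using e by linarith+
    then have "(e, 0, r) \<in> heis_orbit_representatives n"
      unfolding heis_orbit_representatives_def by (auto simp: abs_le_iff)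
    then show ?thesis using orbit by blast
  qed
qed

lemma heis_aut_growth_upper:
  "aut_growth heis {heis_a, heis_b, heis_c} n \<le> (2 * n + 1) ^ 2 + (2 * n ^ 2 + 1)"
proof -
  have "aut_growth heis {heis_a, heis_b, heis_c} n \<le> card (heis_orbit_representatives n)"
    by (rule aut_growth_le_card_representatives[OF _ heis_ball_orbit_representatives])
      (simp add: heis_orbit_representatives_def)
  also have "\<dots> \<le> card ({-int n..int n} \<times> {0 :: int} \<times> {-int n..int n}) +
      card ({0 :: int} \<times> {0 :: int} \<times> {-(int n ^ 2)..int n ^ 2})"
    unfolding heis_orbit_representatives_def by (rule card_Un_le)
  also have "\<dots> = (2 * n + 1) ^ 2 + (2 * n ^ 2 + 1)"
    by (simp add: card_cartesian_product power2_eq_square nat_add_distrib nat_mult_distrib)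
  finally show ?thesis .
qed

lemma heis_centre_in_ball:
  assumes "i \<le> M" "j \<le> M" "r \<le> M"
  shows "(0, 0, int (i * j + r)) \<in> heis_ball (5 * M)"
proof -
  let ?S = "{heis_a, heis_b, heis_c}"
  have gens: "heis_a \<in> ?S \<union> m_inv heis ` ?S" "heis_b \<in> ?S \<union> m_inv heis ` ?S"
    "heis_c \<in> ?S \<union> m_inv heis ` ?S" "inv\<^bsub>heis\<^esub> heis_a \<in> ?S \<union> m_inv heis ` ?S"
    "inv\<^bsub>heis\<^esub> heis_b \<in> ?S \<union> m_inv heis ` ?S"
    by auto
  have "\<one>\<^bsub>heis\<^esub> \<otimes>\<^bsub>heis\<^esub> heis_a [^]\<^bsub>heis\<^esub> i \<otimes>\<^bsub>heis\<^esub> heis_b [^]\<^bsub>heis\<^esub> j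
      \<otimes>\<^bsub>heis\<^esub> (inv\<^bsub>heis\<^esub> heis_a) [^]\<^bsub>heis\<^esub> i \<otimes>\<^bsub>heis\<^esub> (inv\<^bsub>heis\<^esub> heis_b) [^]\<^bsub>heis\<^esub> j
      \<otimes>\<^bsub>heis\<^esub> heis_c [^]\<^bsub>heis\<^esub> r \<in> heis_ball (0 + i + j + i + j + r)"
    by (intro heis.word_ball_mult_pow gens) simp_all
  moreover have "heis_ball (0 + i + j + i + j + r) \<subseteq> heis_ball (5 * M)"
    using assms by (intro word_ball_mono) simp
  ultimately show ?thesis
    by (auto simp: heis_pow heis_a_def heis_b_def heis_c_eq)
qed

lemma heis_aut_growth_lower: "n ^ 2 < aut_growth heis {heis_a, heis_b, heis_c} (5 * n + 5)"
proof -
  let ?A = "(\<lambda>k. (0 :: int, 0 :: int, int k)) ` {0..n ^ 2}"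
  have "?A \<subseteq> heis_ball (5 * (n + 1))"
  proof
    fix g assume "g \<in> ?A"
    then obtain k where k: "k \<le> n ^ 2" "g = (0, 0, int k)" by auto
    have "k < (n + 1) * (n + 1)" using k(1) by (simp add: power2_eq_square)
    then have "k div (n + 1) \<le> n + 1" by (simp add: less_mult_imp_div_less less_imp_le)
    then have "(0, 0, int (k div (n + 1) * (n + 1) + k mod (n + 1))) \<in> heis_ball (5 * (n + 1))"
      by (intro heis_centre_in_ball) auto
    then show "g \<in> heis_ball (5 * (n + 1))" by (simp only: div_mult_mod_eq k(2))
  qed
  moreover have "inj_on (aut_orbit heis) ?A"
    by (rule inj_on_subset[OF inj_on_aut_orbit_heis_centre]) auto
  ultimately have "card ?A \<le> aut_growth heis {heis_a, heis_b, heis_c} (5 * (n + 1))"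
    by (intro card_le_aut_growth) auto
  moreover have "card ?A = n ^ 2 + 1"
    by (simp add: card_image inj_on_def)
  ultimately show ?thesis by (simp add: add.commute)
qed

theorem mainTheorem3:
  shows "growth_equiv (aut_growth heis {heis_a, heis_b, heis_c}) (\<lambda>n. n ^ 2)"
  unfolding growth_equiv_def growth_le_def
proof
  have "aut_growth heis {heis_a, heis_b, heis_c} n \<le> 6 * (6 * n + 6) ^ 2 + 6" for n
    using heis_aut_growth_upper[of n] by (rule order_trans) (simp add: power2_eq_square algebra_simps)
  then show "\<exists>L::nat. L \<noteq> 0 \<and>
      (\<forall>n. aut_growth heis {heis_a, heis_b, heis_c} n \<le> L * (L * n + L) ^ 2 + L)"
    by (intro exI[of _ 6]) simp
  have "n ^ 2 \<le> 5 * aut_growth heis {heis_a, heis_b, heis_c} (5 * n + 5) + 5" for n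
    using heis_aut_growth_lower[of n] by linarith
  then show "\<exists>L::nat. L \<noteq> 0 \<and>
      (\<forall>n. n ^ 2 \<le> L * aut_growth heis {heis_a, heis_b, heis_c} (L * n + L) + L)"
    by (intro exI[of _ 5]) simp
qed

end
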